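(* Let $k$ be a positive integer and $f$ a function. Let $G_1,\dots,G_p$ be graphs such that each $G_i$ has $n_i$ vertices, contains at most $f(k)\cdot n_i^2$ cliques, and contains no clique of size $k$. Let $G$ be an $n$-vertex graph obtained by $(\le k)$-sums of $G_1,\dots,G_p$. Then for some function $f'$ depending on $f$ and $k$, $G$ contains at most $f'(k)\cdot n^2$ cliques.
   Context: Graphs are simple, finite and undirected. A clique is a set of pairwise adjacent vertices (the empty set and single vertices count). $k$-sum: let $G_1,G_2$ be graphs with disjoint vertex sets and, for $i=1,2$, let $W_i\subseteq V(G_i)$ be a clique of size $k$ in $G_i$. Let $G_i'$ be obtained from $G_i$ by deleting some (possibly no) edges with both endpoints in $W_i$. For a bijection $\phi:W_1\to W_2$, a $k$-sum of $G_1$ and $G_2$ is the graph obtained from the union of $G_1'$ and $G_2'$ by identifying $w$ with $\phi(w)$ for all $w\in W_1$. A $(\le k)$-sum is a $k'$-sum for some $k'\le k$. A graph is obtained by $(\le k)$-sums of $G_1,\dots,G_p$ if it arises from these graphs by repeatedly taking $(\le k)$-sums of graphs already obtained (each $G_i$ being used once), i.e. via a binary tree whose leaves are $G_1,\dots,G_p$ and each internal node is a $(\le k)$-sum of its two children. *)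

theory Defs
  imports Complex_Main "HOL-Library.Multiset"
begin

type_synonym 'a graph = "'a set \<times> 'a set set"

definition graph :: "'a graph \<Rightarrow> bool" where
  "graph G \<longleftrightarrow> finite (fst G) \<and> (\<forall>e\<in>snd G. e \<subseteq> fst G \<and> card e = 2)"

definition clique :: "'a graph \<Rightarrow> 'a set \<Rightarrow> bool" where
  "clique G S \<longleftrightarrow> S \<subseteq> fst G \<and> (\<forall>u\<in>S. \<forall>v\<in>S. u \<noteq> v \<longrightarrow> {u, v} \<in> snd G)"

definition num_cliques :: "'a graph \<Rightarrow> nat" where
  "num_cliques G = card {S. clique G S}"

text \<open>G is a k-sum of G1 and G2: G1, G2 are embedded injectively (h1, h2) into G,
  overlapping exactly in the images of the k-cliques W1, W2 (identified via h2^-1 o h1),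
  after deleting some edges inside W1 resp. W2.\<close>
definition ksum :: "nat \<Rightarrow> 'a graph \<Rightarrow> 'a graph \<Rightarrow> 'a graph \<Rightarrow> bool" where
  "ksum k G1 G2 G \<longleftrightarrow>
    (\<exists>W1 W2 E1 E2 (h1::'a \<Rightarrow> 'a) (h2::'a \<Rightarrow> 'a).
       clique G1 W1 \<and> card W1 = k \<and> clique G2 W2 \<and> card W2 = k \<and>
       E1 \<subseteq> snd G1 \<and> (\<forall>e \<in> snd G1 - E1. e \<subseteq> W1) \<and>
       E2 \<subseteq> snd G2 \<and> (\<forall>e \<in> snd G2 - E2. e \<subseteq> W2) \<and>
       inj_on h1 (fst G1) \<and> inj_on h2 (fst G2) \<and>
       h2 ` W2 = h1 ` W1 \<and>
       h1 ` fst G1 \<inter> h2 ` fst G2 = h1 ` W1 \<and>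
       fst G = h1 ` fst G1 \<union> h2 ` fst G2 \<and>
       snd G = (image h1) ` E1 \<union> (image h2) ` E2)"

definition ksum_le :: "nat \<Rightarrow> 'a graph \<Rightarrow> 'a graph \<Rightarrow> 'a graph \<Rightarrow> bool" where
  "ksum_le k G1 G2 G \<longleftrightarrow> (\<exists>k'\<le>k. ksum k' G1 G2 G)"

text \<open>obtained_by_sums k Gs G: G is obtained by (<= k)-sums of the graphs in the multiset Gs,
  each used exactly once (binary tree with leaves Gs).\<close>
inductive obtained_by_sums :: "nat \<Rightarrow> 'a graph multiset \<Rightarrow> 'a graph \<Rightarrow> bool" for k where
  leaf: "obtained_by_sums k {#H#} H"
| node: "obtained_by_sums k A G1 \<Longrightarrow> obtained_by_sums k B G2 \<Longrightarrow> ksum_le k G1 G2 G \<Longrightarrow> obtained_by_sums k (A + B) G"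

end

(* Gluing G1 and G2 along a j-clique (j <= k) gives n = n1 + n2 - j vertices, and every clique
   of the sum lies on one side; the 2^j subsets of the glued clique are cliques on both sides,
   so N(G) <= N(G1) + N(G2) - 2^j for the clique counts. Along the summation tree this keeps
   N <= a n^2 with a = max (f k) (4^k): if a side has at most k vertices outside the glued
   clique, its at most 2^(2k) <= a cliques are paid for by n^2 >= n2^2 + 1, and otherwise
   n1^2 + n2^2 <= n^2. *)
theory Submission
  imports Defs
begin

lemma square_add_ge_add_squares:
  fixes j t1 t2 :: real
  assumes "j \<le> t1" "j \<le> t2" "0 \<le> j"
  shows "(j + t1)\<^sup>2 + (j + t2)\<^sup>2 \<le> (j + t1 + t2)\<^sup>2"
proof -
  have "j * j \<le> t1 * t2" using assms by (intro mult_mono) auto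
  moreover have "0 \<le> t1 * t2" using assms by simp
  ultimately show ?thesis by (simp add: power2_eq_square algebra_simps)
qed

lemma sum_minus_pow_le_square_ordered:
  fixes a x1 x2 :: real and j n1 n2 k :: nat
  assumes "j \<le> k" "j \<le> n1" "n1 \<le> n2"
    and "x1 \<le> 2 ^ n1" "x1 \<le> a * (real n1)\<^sup>2" "x2 \<le> a * (real n2)\<^sup>2" "4 ^ k \<le> a"
  shows "x1 + x2 - 2 ^ j \<le> a * (real (n1 + n2 - j))\<^sup>2"
proof -
  obtain t where t: "n1 = j + t" using \<open>j \<le> n1\<close> le_Suc_ex by blast
  have m: "real (n1 + n2 - j) = real n2 + real t" using t by simp
  have "0 \<le> a" using \<open>4 ^ k \<le> a\<close> zero_le_power[of "4::real" k] by linarith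
  have "0 \<le> (2::real) ^ j" by simp
  consider "t = 0" | "0 < t" "t \<le> k" | "k < t" by linarith
  then show ?thesis
  proof cases
    case 1
    then show ?thesis using assms t m by simp
  next
    case 2
    have "(2::real) ^ n1 \<le> 2 ^ (2 * k)"
      using t 2 \<open>j \<le> k\<close> by (intro power_increasing) auto
    then have "x1 \<le> 2 ^ (2 * k)" using \<open>x1 \<le> 2 ^ n1\<close> by linarith
    then have "x1 \<le> a" using \<open>4 ^ k \<le> a\<close> by (simp add: power_mult)
    have "1 \<le> real t" using 2 by simp
    then have "1 \<le> real t * real t" using mult_mono[of 1 "real t" 1 "real t"] by simp
    moreover have "(real n2 + real t)\<^sup>2 = (real n2)\<^sup>2 + real t * real t + 2 * (real n2 * real t)"
      by (simp add: power2_eq_square algebra_simps)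
    moreover have "0 \<le> real n2 * real t" by simp
    ultimately have "(real n2)\<^sup>2 + 1 \<le> (real n2 + real t)\<^sup>2" by linarith
    from mult_left_mono[OF this \<open>0 \<le> a\<close>] show ?thesis
      using \<open>x1 \<le> a\<close> \<open>x2 \<le> a * (real n2)\<^sup>2\<close> \<open>0 \<le> (2::real) ^ j\<close>
      unfolding m distrib_left mult_1_right by linarith
  next
    case 3
    obtain u where u: "n2 = j + u" using assms le_Suc_ex by (metis le_trans)
    have sum: "real (n1 + n2 - j) = real j + real t + real u" using t u by simp
    have "(real j + real t)\<^sup>2 + (real j + real u)\<^sup>2 \<le> (real j + real t + real u)\<^sup>2"
      using 3 t u assms by (intro square_add_ge_add_squares) auto
    then have "(real n1)\<^sup>2 + (real n2)\<^sup>2 \<le> (real (n1 + n2 - j))\<^sup>2"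
      unfolding sum unfolding t u of_nat_add .
    from mult_left_mono[OF this \<open>0 \<le> a\<close>] show ?thesis
      using assms \<open>0 \<le> (2::real) ^ j\<close> unfolding distrib_left by linarith
  qed
qed

lemma sum_minus_pow_le_square:
  fixes a x1 x2 :: real and j n1 n2 k :: nat
  assumes "j \<le> k" "j \<le> n1" "j \<le> n2" "x1 \<le> 2 ^ n1" "x2 \<le> 2 ^ n2"
    and "x1 \<le> a * (real n1)\<^sup>2" "x2 \<le> a * (real n2)\<^sup>2" "4 ^ k \<le> a"
  shows "x1 + x2 - 2 ^ j \<le> a * (real (n1 + n2 - j))\<^sup>2"
proof (cases "n1 \<le> n2")
  case True
  then show ?thesis using assms sum_minus_pow_le_square_ordered by blast
next
  case False
  then have "x2 + x1 - 2 ^ j \<le> a * (real (n2 + n1 - j))\<^sup>2"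
    using assms by (intro sum_minus_pow_le_square_ordered) auto
  then show ?thesis by (simp add: add.commute)
qed

lemma finite_cliques: "finite (fst G) \<Longrightarrow> finite {S. clique G S}"
  by (rule finite_subset[of _ "Pow (fst G)"]) (auto simp: clique_def)

lemma num_cliques_le_pow:
  assumes "finite (fst G)"
  shows "num_cliques G \<le> 2 ^ card (fst G)"
proof -
  have "card {S. clique G S} \<le> card (Pow (fst G))"
    using assms by (intro card_mono) (auto simp: clique_def)
  then show ?thesis unfolding num_cliques_def using assms by (simp add: card_Pow)
qed

locale ksum_decomposition =
  fixes k :: nat and G1 G2 G :: "'a graph" and W1 W2 :: "'a set"
    and E1 E2 :: "'a set set" and h1 h2 :: "'a \<Rightarrow> 'a"
  assumes graph1: "graph G1" and graph2: "graph G2"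
    and clique1: "clique G1 W1" and card1: "card W1 = k"
    and clique2: "clique G2 W2" and card2: "card W2 = k"
    and edges1: "E1 \<subseteq> snd G1" and edges2: "E2 \<subseteq> snd G2"
    and inj1: "inj_on h1 (fst G1)" and inj2: "inj_on h2 (fst G2)"
    and glue: "h2 ` W2 = h1 ` W1"
    and overlap: "h1 ` fst G1 \<inter> h2 ` fst G2 = h1 ` W1"
    and vertices: "fst G = h1 ` fst G1 \<union> h2 ` fst G2"
    and edges: "snd G = image h1 ` E1 \<union> image h2 ` E2"

lemma ksum_decomposition_exists:
  assumes "ksum k G1 G2 G" "graph G1" "graph G2"
  obtains W1 W2 E1 E2 h1 h2 where "ksum_decomposition k G1 G2 G W1 W2 E1 E2 h1 h2"
  using assms unfolding ksum_def by (elim exE conjE) (rule that, unfold_locales)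

context ksum_decomposition
begin

lemma swap: "ksum_decomposition k G2 G1 G W2 W1 E2 E1 h2 h1"
  by unfold_locales
    (use graph1 graph2 clique1 clique2 card1 card2 edges1 edges2 inj1 inj2 glue overlap vertices edges in
      \<open>auto simp: Int_commute Un_commute\<close>)

lemma W1_subset: "W1 \<subseteq> fst G1"
  using clique1 by (simp add: clique_def)

lemma graph_sum: "graph G"
proof -
  have "e \<subseteq> fst G \<and> card e = 2" if "e \<in> snd G" for e
  proof -
    from that consider e' where "e' \<in> E1" "e = h1 ` e'" | e' where "e' \<in> E2" "e = h2 ` e'"
      using edges by auto
    then show ?thesis
    proof cases
      case 1
      then have "e' \<subseteq> fst G1" "card e' = 2" using edges1 graph1 by (auto simp: graph_def)
      then show ?thesis using 1 vertices inj_on_subset[OF inj1] by (auto simp: card_image)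
    next
      case 2
      then have "e' \<subseteq> fst G2" "card e' = 2" using edges2 graph2 by (auto simp: graph_def)
      then show ?thesis using 2 vertices inj_on_subset[OF inj2] by (auto simp: card_image)
    qed
  qed
  moreover have "finite (fst G)" using vertices graph1 graph2 by (simp add: graph_def)
  ultimately show ?thesis by (simp add: graph_def)
qed

lemma card_vertices: "card (fst G) + k = card (fst G1) + card (fst G2)"
proof -
  have "finite (fst G1)" "finite (fst G2)" using graph1 graph2 by (simp_all add: graph_def)
  then have "card (fst G) + card (h1 ` W1) = card (h1 ` fst G1) + card (h2 ` fst G2)"
    using card_Un_Int[of "h1 ` fst G1" "h2 ` fst G2"] vertices overlap by simp
  moreover have "card (h1 ` W1) = k"
    using card1 inj_on_subset[OF inj1 W1_subset] by (simp add: card_image)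
  ultimately show ?thesis using inj1 inj2 by (simp add: card_image)
qed

lemma W2_subset: "W2 \<subseteq> fst G2"
  using clique2 by (simp add: clique_def)

lemma card_clique_le: "k \<le> card (fst G1)" "k \<le> card (fst G2)"
  using card1 card2 W1_subset W2_subset graph1 graph2 by (metis card_mono graph_def)+

lemma edge_cases:
  assumes "{u, v} \<in> snd G"
  obtains "u \<in> h1 ` fst G1" "v \<in> h1 ` fst G1" "{u, v} \<in> image h1 ` snd G1"
    | "u \<in> h2 ` fst G2" "v \<in> h2 ` fst G2" "{u, v} \<in> image h2 ` snd G2"
proof -
  from assms consider e where "e \<in> E1" "{u, v} = h1 ` e" | e where "e \<in> E2" "{u, v} = h2 ` e"
    using edges by auto
  then show thesis
  proof cases
    case 1
    then have "e \<subseteq> fst G1" "e \<in> snd G1" using edges1 graph1 by (auto simp: graph_def)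
    with 1 show thesis by (intro that(1); blast)
  next
    case 2
    then have "e \<subseteq> fst G2" "e \<in> snd G2" using edges2 graph2 by (auto simp: graph_def)
    with 2 show thesis by (intro that(2); blast)
  qed
qed

lemma clique_within_side:
  assumes "clique G S"
  shows "S \<subseteq> h1 ` fst G1 \<or> S \<subseteq> h2 ` fst G2"
proof (rule ccontr)
  assume "\<not> ?thesis"
  then obtain u v where u: "u \<in> S" "u \<notin> h1 ` fst G1" and v: "v \<in> S" "v \<notin> h2 ` fst G2"
    by blast
  have "u \<noteq> v" using u v assms vertices by (auto simp: clique_def)
  then have "{u, v} \<in> snd G" using u v assms by (simp add: clique_def)
  then show False by (rule edge_cases) (use u v in auto)
qed

lemma clique_preimage:
  assumes "clique G S" "S \<subseteq> h1 ` fst G1"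
  shows "clique G1 (fst G1 \<inter> h1 -` S)"
  unfolding clique_def
proof (intro conjI ballI impI)
  fix u v assume u: "u \<in> fst G1 \<inter> h1 -` S" and v: "v \<in> fst G1 \<inter> h1 -` S" and "u \<noteq> v"
  then have "h1 u \<noteq> h1 v" using inj1 by (auto dest: inj_onD)
  then have "{h1 u, h1 v} \<in> snd G" using assms(1) u v by (simp add: clique_def)
  then show "{u, v} \<in> snd G1"
  proof (rule edge_cases)
    assume "{h1 u, h1 v} \<in> image h1 ` snd G1"
    then obtain e where "e \<in> snd G1" "h1 ` {u, v} = h1 ` e" by auto
    moreover have "e \<subseteq> fst G1" using \<open>e \<in> snd G1\<close> graph1 by (simp add: graph_def)
    ultimately show ?thesis using u v inj1 by (metis IntD1 empty_subsetI inj_on_image_eq_iff insert_subset)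
  next
    assume "h1 u \<in> h2 ` fst G2" "h1 v \<in> h2 ` fst G2"
    then have "h1 u \<in> h1 ` W1" "h1 v \<in> h1 ` W1" using u v overlap by blast+
    then have "u \<in> W1" "v \<in> W1" using u v inj_on_image_mem_iff[OF inj1 _ W1_subset] by auto
    then show ?thesis using clique1 \<open>u \<noteq> v\<close> by (simp add: clique_def)
  qed
qed auto

lemma cliques_subset_images:
  "{S. clique G S} \<subseteq> image h1 ` {T. clique G1 T} \<union> image h2 ` ({T. clique G2 T} - Pow W2)"
proof
  interpret swapped: ksum_decomposition k G2 G1 G W2 W1 E2 E1 h2 h1 by (rule swap)
  fix S assume "S \<in> {S. clique G S}"
  then have S: "clique G S" by simp
  show "S \<in> image h1 ` {T. clique G1 T} \<union> image h2 ` ({T. clique G2 T} - Pow W2)"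
  proof (cases "S \<subseteq> h1 ` fst G1")
    case True
    then have "S = h1 ` (fst G1 \<inter> h1 -` S)" by auto
    with clique_preimage[OF S True] show ?thesis by blast
  next
    case False
    then have S2: "S \<subseteq> h2 ` fst G2" using clique_within_side[OF S] by blast
    let ?T = "fst G2 \<inter> h2 -` S"
    have "S = h2 ` ?T" using S2 by auto
    moreover have "\<not> ?T \<subseteq> W2"
    proof
      assume "?T \<subseteq> W2"
      then have "S \<subseteq> h1 ` W1" using \<open>S = h2 ` ?T\<close> glue by blast
      then show False using False W1_subset by blast
    qed
    ultimately show ?thesis using swapped.clique_preimage[OF S S2] by blast
  qed
qed

lemma num_cliques_add_pow_le: "num_cliques G + 2 ^ k \<le> num_cliques G1 + num_cliques G2"
proof -
  let ?C1 = "{T. clique G1 T}" and ?C2 = "{T. clique G2 T}"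
  have fin1: "finite ?C1" and fin2: "finite ?C2"
    using graph1 graph2 by (simp_all add: finite_cliques graph_def)
  have "finite W2" using clique2 graph2 finite_subset by (auto simp: clique_def graph_def)
  then have card_Pow_W2: "card (Pow W2) = 2 ^ k" using card2 by (simp add: card_Pow)
  have Pow_W2: "Pow W2 \<subseteq> ?C2" using clique2 by (auto simp: clique_def)
  have "num_cliques G \<le> card (image h1 ` ?C1 \<union> image h2 ` (?C2 - Pow W2))"
    unfolding num_cliques_def using cliques_subset_images fin1 fin2 by (intro card_mono) auto
  also have "\<dots> \<le> card (image h1 ` ?C1) + card (image h2 ` (?C2 - Pow W2))"
    by (rule card_Un_le)
  also have "\<dots> \<le> card ?C1 + card (?C2 - Pow W2)"
    by (intro add_mono card_image_le) (use fin1 fin2 in auto)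
  also have "card (?C2 - Pow W2) = card ?C2 - 2 ^ k"
    using card_Diff_subset[OF _ Pow_W2] \<open>finite W2\<close> card_Pow_W2 by simp
  finally show ?thesis
    using card_mono[OF fin2 Pow_W2] card_Pow_W2 unfolding num_cliques_def by linarith
qed

end

lemma obtained_by_sums_num_cliques_le:
  fixes a :: real
  assumes "obtained_by_sums k Gs G"
    and "\<forall>H \<in># Gs. graph H \<and> real (num_cliques H) \<le> a * (real (card (fst H)))\<^sup>2"
    and "4 ^ k \<le> a"
  shows "graph G \<and> real (num_cliques G) \<le> a * (real (card (fst G)))\<^sup>2"
  using assms(1,2)
proof (induction rule: obtained_by_sums.induct)
  case (leaf H)
  then show ?case by simp
next
  case (node A G1 B G2 G)
  then have graphs: "graph G1" "graph G2"
    and IH1: "real (num_cliques G1) \<le> a * (real (card (fst G1)))\<^sup>2"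
    and IH2: "real (num_cliques G2) \<le> a * (real (card (fst G2)))\<^sup>2" by auto
  obtain j where "j \<le> k" "ksum j G1 G2 G" using node.hyps(3) unfolding ksum_le_def by blast
  then obtain W1 W2 E1 E2 h1 h2 where "ksum_decomposition j G1 G2 G W1 W2 E1 E2 h1 h2"
    using graphs by (elim ksum_decomposition_exists)
  then interpret ksum_decomposition j G1 G2 G W1 W2 E1 E2 h1 h2 .
  have "real (num_cliques G1) \<le> 2 ^ card (fst G1)" "real (num_cliques G2) \<le> 2 ^ card (fst G2)"
    using graphs num_cliques_le_pow[of G1] num_cliques_le_pow[of G2]
    by (simp_all add: graph_def flip: of_nat_le_iff)
  then have "real (num_cliques G1) + real (num_cliques G2) - 2 ^ j
      \<le> a * (real (card (fst G1) + card (fst G2) - j))\<^sup>2"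
    using \<open>j \<le> k\<close> card_clique_le IH1 IH2 \<open>4 ^ k \<le> a\<close> by (intro sum_minus_pow_le_square)
  moreover have "card (fst G1) + card (fst G2) - j = card (fst G)"
    using card_vertices by simp
  moreover have "real (num_cliques G) + 2 ^ j \<le> real (num_cliques G1) + real (num_cliques G2)"
    using of_nat_mono[OF num_cliques_add_pow_le, where 'a=real] by simp
  ultimately show ?case using graph_sum by simp
qed

theorem lemma11:
  fixes k :: nat and f :: "nat \<Rightarrow> real"
  assumes "k > 0"
  shows "\<exists>C::real. \<forall>(Gs :: nat graph multiset) (G :: nat graph).
           (\<forall>H \<in># Gs. graph H
               \<and> real (num_cliques H) \<le> f k * (real (card (fst H)))^2
               \<and> \<not> (\<exists>S. clique H S \<and> card S = k))
           \<and> obtained_by_sums k Gs G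
           \<longrightarrow> real (num_cliques G) \<le> C * (real (card (fst G)))^2"
proof (intro exI[of _ "max (f k) (4 ^ k)"] allI impI)
  fix Gs :: "nat graph multiset" and G :: "nat graph"
  assume pieces: "(\<forall>H \<in># Gs. graph H
               \<and> real (num_cliques H) \<le> f k * (real (card (fst H)))^2
               \<and> \<not> (\<exists>S. clique H S \<and> card S = k))
           \<and> obtained_by_sums k Gs G"
  have "f k * (real n)\<^sup>2 \<le> max (f k) (4 ^ k) * (real n)\<^sup>2" for n
    by (intro mult_right_mono) auto
  with pieces have "\<forall>H \<in># Gs. graph H \<and>
      real (num_cliques H) \<le> max (f k) (4 ^ k) * (real (card (fst H)))\<^sup>2"
    by (meson order_trans)
  with pieces show "real (num_cliques G) \<le> max (f k) (4 ^ k) * (real (card (fst G)))\<^sup>2"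
    using obtained_by_sums_num_cliques_le[of k Gs G "max (f k) (4 ^ k)"] by simp
qed

end
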